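(* Let $n \ge 3$ and $k = \lceil \log_2 n \rceil$. Then $\det'(Q_n) = k$ if $2^{k-1} < n \le 2^{k-1} + k$, and $\det'(Q_n) = k+1$ if $2^{k-1} + k < n \le 2^k$.
   Context: $Q_n$ is the $n$-dimensional hypercube: its vertices are the binary strings of length $n$, two being adjacent iff they differ in exactly one bit. For a graph $G$ with at most one isolated vertex and no component isomorphic to $K_2$, an edge subset $T$ is an edge determining set if the only automorphism $\phi$ of $G$ satisfying $\{\phi(u),\phi(v)\}=\{u,v\}$ for all $\{u,v\}\in T$ is the identity; the determining index $\det'(G)$ is the minimum size of an edge determining set. *)

theory Defs
  imports Complex_Main
begin

text \<open>A simple graph is given by a vertex set V and an edge set E of two-element
  subsets of V.\<close>

definition graph_aut :: "'a set \<Rightarrow> 'a set set \<Rightarrow> ('a \<Rightarrow> 'a) \<Rightarrow> bool" where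
  "graph_aut V E \<phi> \<longleftrightarrow> bij_betw \<phi> V V \<and>
     (\<forall>u\<in>V. \<forall>v\<in>V. {u, v} \<in> E \<longleftrightarrow> {\<phi> u, \<phi> v} \<in> E)"

definition edge_determining_set :: "'a set \<Rightarrow> 'a set set \<Rightarrow> 'a set set \<Rightarrow> bool" where
  "edge_determining_set V E T \<longleftrightarrow> T \<subseteq> E \<and>
     (\<forall>\<phi>. graph_aut V E \<phi> \<and> (\<forall>u v. {u, v} \<in> T \<longrightarrow> {\<phi> u, \<phi> v} = {u, v})
        \<longrightarrow> (\<forall>x\<in>V. \<phi> x = x))"

definition determining_index :: "'a set \<Rightarrow> 'a set set \<Rightarrow> nat" where
  "determining_index V E = (LEAST k. \<exists>T. edge_determining_set V E T \<and> card T = k)"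

definition hypercube_verts :: "nat \<Rightarrow> bool list set" where
  "hypercube_verts n = {xs. length xs = n}"

definition hypercube_adj :: "bool list \<Rightarrow> bool list \<Rightarrow> bool" where
  "hypercube_adj xs ys \<longleftrightarrow> length xs = length ys \<and>
     card {i. i < length xs \<and> xs ! i \<noteq> ys ! i} = 1"

definition hypercube_edges :: "nat \<Rightarrow> bool list set set" where
  "hypercube_edges n = {{u, v} | u v. u \<in> hypercube_verts n \<and> v \<in> hypercube_verts n \<and> hypercube_adj u v}"

end

theory Submission
  imports Defs "HOL-Library.Log_Nat" "HOL-Combinatorics.Transposition"
begin

text \<open>
  Every automorphism of \<open>Q\<^sub>n\<close> permutes the coordinates and complements some of them: the
  images of the zero vertex and of its neighbours determine the permutation, and induction on the
  number of ones propagates the formula, because two vertices at distance two have exactly two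
  common neighbours.

  Let \<open>T\<close> be edge determining with \<open>t\<close> edges. Their directions are at most \<open>t\<close>
  coordinates; every other coordinate is constant along the edges of \<open>T\<close>, so it is described by
  the set of edges of \<open>T\<close> on which it differs from a fixed endpoint \<open>x\<^sub>0\<close> of a fixed edge
  \<open>e\<^sub>0 \<in> T\<close>, a subset of \<open>T - {e\<^sub>0}\<close>. Two coordinates with the same set can be swapped (and both
  complemented if they differ at \<open>x\<^sub>0\<close>) by an automorphism fixing every endpoint of \<open>T\<close>. Hence
  \<open>n - t \<le> 2\<^bsup>t-1\<^esup>\<close>.

  For \<open>2 \<le> t \<le> n \<le> 2\<^bsup>t-1\<^esup> + t\<close> label each coordinate \<open>c \<ge> t\<close> by the binary word
  \<open>c - t\<close> of length \<open>t - 1\<close>, and take the edge in direction \<open>j < t\<close> at the vertex reading bit \<open>j\<close>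
  of every label (the zero vertex for \<open>j = t - 1\<close>). An automorphism fixing these edges fixes the
  directions \<open>0, \<dots>, t - 1\<close>, complements nothing because of the zero vertex, and preserves every
  label. So \<open>det'(Q\<^sub>n)\<close> is the least \<open>t\<close> with \<open>n \<le> 2\<^bsup>t-1\<^esup> + t\<close>, which is \<open>k\<close> or \<open>k + 1\<close> on the two
  ranges of the statement.
\<close>

section \<open>Edges of the hypercube\<close>

definition flip :: "nat \<Rightarrow> bool list \<Rightarrow> bool list" where
  "flip i x = x[i := \<not> x ! i]"

lemma length_flip [simp]: "length (flip i x) = length x"
  by (simp add: flip_def)

lemma nth_flip: "k < length x \<Longrightarrow> flip i x ! k = (x ! k \<noteq> (k = i))"
  by (auto simp: flip_def nth_list_update)

lemma flip_flip [simp]: "flip i (flip i x) = x"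
  by (rule nth_equalityI) (auto simp: nth_flip)

lemma flip_eq_flip_iff:
  assumes "i < length x" "j < length x"
  shows "flip i x = flip j x \<longleftrightarrow> i = j"
proof
  assume "flip i x = flip j x"
  then have "flip i x ! i = flip j x ! i" by simp
  then show "i = j" using assms by (auto simp: nth_flip)
qed simp

lemma hypercube_verts_iff [simp]: "x \<in> hypercube_verts n \<longleftrightarrow> length x = n"
  by (simp add: hypercube_verts_def)

lemma finite_hypercube_verts: "finite (hypercube_verts n)"
  by (simp add: hypercube_verts_def finite_list_length)

lemma hypercube_adj_commute: "hypercube_adj u v \<longleftrightarrow> hypercube_adj v u"
proof -
  have sym: "hypercube_adj y x" if "hypercube_adj x y" for x y
  proof -
    have len: "length y = length x" using that by (simp add: hypercube_adj_def)
    have card: "card {i. i < length x \<and> x ! i \<noteq> y ! i} = 1"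
      using that unfolding hypercube_adj_def by (rule conjunct2)
    have "{i. i < length y \<and> y ! i \<noteq> x ! i} = {i. i < length x \<and> x ! i \<noteq> y ! i}"
      using len by auto
    then show ?thesis unfolding hypercube_adj_def using len card by (simp only:)
  qed
  show ?thesis using sym[of u v] sym[of v u] by blast
qed

lemma hypercube_adj_iff_flip:
  assumes "length u = n"
  shows "hypercube_adj u v \<longleftrightarrow> (\<exists>i<n. v = flip i u)"
proof
  assume adj: "hypercube_adj u v"
  then have lv: "length v = n" using assms by (simp add: hypercube_adj_def)
  from adj obtain i where i: "{k. k < n \<and> u ! k \<noteq> v ! k} = {i}"
    using assms by (auto simp: hypercube_adj_def card_1_singleton_iff)
  then have "i < n" by auto
  moreover have "v = flip i u"
  proof (rule nth_equalityI)
    fix k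
    assume "k < length v"
    moreover have "k < n \<Longrightarrow> u ! k \<noteq> v ! k \<longleftrightarrow> k = i" using i by blast
    ultimately show "v ! k = flip i u ! k" using lv assms by (auto simp: nth_flip)
  qed (use lv assms in simp)
  ultimately show "\<exists>i<n. v = flip i u" by blast
next
  assume "\<exists>i<n. v = flip i u"
  then obtain i where "i < n" "v = flip i u" by blast
  moreover from this have "{k. k < length u \<and> u ! k \<noteq> v ! k} = {i}"
    using assms by (auto simp: nth_flip)
  ultimately show "hypercube_adj u v" by (simp add: hypercube_adj_def)
qed

lemma doubleton_in_hypercube_edges_iff:
  assumes "length u = n" "length v = n"
  shows "{u, v} \<in> hypercube_edges n \<longleftrightarrow> hypercube_adj u v"
proof
  assume "{u, v} \<in> hypercube_edges n"
  then obtain u' v' where "{u, v} = {u', v'}" "hypercube_adj u' v'"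
    unfolding hypercube_edges_def by blast
  then show "hypercube_adj u v" using hypercube_adj_commute[of u' v'] by (auto simp: doubleton_eq_iff)
next
  assume "hypercube_adj u v"
  then show "{u, v} \<in> hypercube_edges n" using assms unfolding hypercube_edges_def by auto
qed

lemma flip_edge_in_hypercube_edges_iff:
  assumes "length u = n"
  shows "{u, v} \<in> hypercube_edges n \<longleftrightarrow> (\<exists>i<n. v = flip i u)"
proof
  assume edge: "{u, v} \<in> hypercube_edges n"
  then have "length v = n" unfolding hypercube_edges_def by (auto simp: doubleton_eq_iff)
  with edge show "\<exists>i<n. v = flip i u"
    using assms doubleton_in_hypercube_edges_iff hypercube_adj_iff_flip by simp
next
  assume "\<exists>i<n. v = flip i u"
  then show "{u, v} \<in> hypercube_edges n"
    using assms doubleton_in_hypercube_edges_iff hypercube_adj_iff_flip by auto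
qed

lemma hypercube_edges_iff:
  "e \<in> hypercube_edges n \<longleftrightarrow> (\<exists>u i. length u = n \<and> i < n \<and> e = {u, flip i u})"
proof
  assume "e \<in> hypercube_edges n"
  then obtain u v where "e = {u, v}" "length u = n" "hypercube_adj u v"
    unfolding hypercube_edges_def by auto
  then obtain i where "i < n" "v = flip i u"
    using hypercube_adj_iff_flip by blast
  then show "\<exists>u i. length u = n \<and> i < n \<and> e = {u, flip i u}"
    using \<open>e = {u, v}\<close> \<open>length u = n\<close> by blast
next
  assume "\<exists>u i. length u = n \<and> i < n \<and> e = {u, flip i u}"
  then obtain u i where "length u = n" "i < n" "e = {u, flip i u}" by blast
  then show "e \<in> hypercube_edges n"
    using flip_edge_in_hypercube_edges_iff[of u n "flip i u"] by auto
qed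

lemma finite_hypercube_edges: "finite (hypercube_edges n)"
proof -
  have "hypercube_edges n \<subseteq> Pow (hypercube_verts n)"
    unfolding hypercube_edges_def by auto
  then show ?thesis using finite_hypercube_verts finite_subset by blast
qed

lemma hypercube_edge_direction_unique:
  assumes "length u = n" "length v = n" "i < n" "j < n" "{u, flip i u} = {v, flip j v}"
  shows "i = j"
proof -
  from assms(5) consider "u = v" "flip i u = flip j v" | "u = flip j v" "flip i u = v"
    by (auto simp: doubleton_eq_iff)
  then show ?thesis
  proof cases
    case 1
    then show ?thesis using assms(1,3,4) flip_eq_flip_iff by auto
  next
    case 2
    then have "flip i (flip j v) ! j = v ! j" by simp
    then show ?thesis using assms(2-4) by (auto simp: nth_flip split: if_splits)
  qed
qed

section \<open>Automorphisms of the hypercube\<close>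

definition coord_map :: "(nat \<Rightarrow> nat) \<Rightarrow> (nat \<Rightarrow> bool) \<Rightarrow> bool list \<Rightarrow> bool list" where
  "coord_map \<sigma> b x = map (\<lambda>k. x ! \<sigma> k \<noteq> b k) [0..<length x]"

lemma length_coord_map [simp]: "length (coord_map \<sigma> b x) = length x"
  by (simp add: coord_map_def)

lemma nth_coord_map: "k < length x \<Longrightarrow> coord_map \<sigma> b x ! k = (x ! \<sigma> k \<noteq> b k)"
  by (simp add: coord_map_def)

lemma coord_map_id_eq_flip: "coord_map id (\<lambda>k. k = i) = flip i"
  by (rule ext, rule nth_equalityI) (auto simp: nth_coord_map nth_flip)

lemma bij_betw_lessThan_less:
  assumes "bij_betw \<pi> {..<n} {..<n}" "k < n"
  shows "\<pi> k < n"
  using bij_betw_apply[OF assms(1)] assms(2) by simp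

lemma bij_betw_lessThan_eq_iff:
  assumes "bij_betw \<pi> {..<n} {..<n}" "k < n" "k' < n"
  shows "\<pi> k = \<pi> k' \<longleftrightarrow> k = k'"
  using inj_on_eq_iff[OF bij_betw_imp_inj_on[OF assms(1)]] assms(2,3) by simp

lemma nth_eq_on_bij_imp_eq:
  assumes "bij_betw \<pi> {..<n} {..<n}" "length y = n" "length y' = n"
    and "\<And>i. i < n \<Longrightarrow> y ! \<pi> i = y' ! \<pi> i"
  shows "y = y'"
proof (rule nth_equalityI)
  fix k
  assume "k < length y"
  then have "k \<in> \<pi> ` {..<n}" using bij_betw_imp_surj_on[OF assms(1)] assms(2) by simp
  then show "y ! k = y' ! k" using assms by auto
qed (use assms in simp)

lemma graph_aut_coord_map:
  assumes \<sigma>: "bij_betw \<sigma> {..<n} {..<n}"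
  shows "graph_aut (hypercube_verts n) (hypercube_edges n) (coord_map \<sigma> b)"
proof -
  have \<sigma>_range: "\<sigma> ` {..<n} = {..<n}" using bij_betw_imp_surj_on[OF \<sigma>] .
  have "inj_on (coord_map \<sigma> b) (hypercube_verts n)"
  proof (rule inj_onI)
    fix x y
    assume x: "x \<in> hypercube_verts n" and y: "y \<in> hypercube_verts n"
      and eq: "coord_map \<sigma> b x = coord_map \<sigma> b y"
    have "x ! \<sigma> k = y ! \<sigma> k" if "k < n" for k
    proof -
      have "coord_map \<sigma> b x ! k = coord_map \<sigma> b y ! k" using eq by simp
      then show ?thesis using that x y by (cases "b k") (simp_all add: nth_coord_map)
    qed
    then show "x = y" using x y by (intro nth_eq_on_bij_imp_eq[OF \<sigma>]) simp_all
  qed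
  moreover have "coord_map \<sigma> b ` hypercube_verts n \<subseteq> hypercube_verts n" by auto
  ultimately have bij: "bij_betw (coord_map \<sigma> b) (hypercube_verts n) (hypercube_verts n)"
    by (simp add: bij_betw_def endo_inj_surj[OF finite_hypercube_verts])
  have adj: "hypercube_adj (coord_map \<sigma> b u) (coord_map \<sigma> b v) \<longleftrightarrow> hypercube_adj u v"
    if u: "length u = n" and v: "length v = n" for u v
  proof -
    let ?D = "{i. i < n \<and> u ! i \<noteq> v ! i}"
    let ?D\<sigma> = "{k. k < n \<and> u ! \<sigma> k \<noteq> v ! \<sigma> k}"
    have "\<sigma> ` ?D\<sigma> = ?D"
    proof
      show "\<sigma> ` ?D\<sigma> \<subseteq> ?D" using bij_betw_apply[OF \<sigma>] by auto
      show "?D \<subseteq> \<sigma> ` ?D\<sigma>"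
      proof
        fix i
        assume i: "i \<in> ?D"
        then have "i \<in> \<sigma> ` {..<n}" using \<sigma>_range by simp
        then obtain k where "k < n" "i = \<sigma> k" by auto
        then show "i \<in> \<sigma> ` ?D\<sigma>" using i by auto
      qed
    qed
    then have "bij_betw \<sigma> ?D\<sigma> ?D" by (rule bij_betw_subset[OF \<sigma>, rotated]) auto
    then have "card ?D\<sigma> = card ?D" by (rule bij_betw_same_card)
    moreover have "{k. k < n \<and> coord_map \<sigma> b u ! k \<noteq> coord_map \<sigma> b v ! k} = ?D\<sigma>"
      using u v by (auto simp: nth_coord_map)
    ultimately show ?thesis using u v by (simp add: hypercube_adj_def)
  qed
  show ?thesis
    unfolding graph_aut_def
  proof (intro conjI ballI)
    fix u v
    assume "u \<in> hypercube_verts n" "v \<in> hypercube_verts n"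
    then show "{u, v} \<in> hypercube_edges n \<longleftrightarrow> {coord_map \<sigma> b u, coord_map \<sigma> b v} \<in> hypercube_edges n"
      using adj doubleton_in_hypercube_edges_iff by simp
  qed (rule bij)
qed

lemma graph_aut_bij_betw: "graph_aut V E \<phi> \<Longrightarrow> bij_betw \<phi> V V"
  unfolding graph_aut_def by (rule conjunct1)

lemma graph_aut_edge:
  assumes "graph_aut V E \<phi>" "u \<in> V" "v \<in> V" "{u, v} \<in> E"
  shows "{\<phi> u, \<phi> v} \<in> E"
proof -
  have "\<forall>u\<in>V. \<forall>v\<in>V. {u, v} \<in> E \<longleftrightarrow> {\<phi> u, \<phi> v} \<in> E"
    using assms(1) unfolding graph_aut_def by (rule conjunct2)
  then show ?thesis using assms(2-4) by simp
qed

lemma hypercube_aut_length: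
  assumes "graph_aut (hypercube_verts n) (hypercube_edges n) \<phi>" "length x = n"
  shows "length (\<phi> x) = n"
proof -
  have "\<phi> x \<in> hypercube_verts n"
    using bij_betw_apply[OF graph_aut_bij_betw[OF assms(1)]] assms(2) by simp
  then show ?thesis by simp
qed

lemma hypercube_aut_flip:
  assumes aut: "graph_aut (hypercube_verts n) (hypercube_edges n) \<phi>" and "length x = n" "i < n"
  shows "\<exists>p<n. \<phi> (flip i x) = flip p (\<phi> x)"
proof -
  have "{x, flip i x} \<in> hypercube_edges n"
    using flip_edge_in_hypercube_edges_iff[of x n "flip i x"] assms by blast
  then have "{\<phi> x, \<phi> (flip i x)} \<in> hypercube_edges n"
    using graph_aut_edge[OF aut] assms by simp
  moreover have "length (\<phi> x) = n" using hypercube_aut_length[OF aut] assms by simp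
  ultimately show ?thesis using flip_edge_in_hypercube_edges_iff[of "\<phi> x" n] by blast
qed

text \<open>
  \<open>\<phi> x\<close> is a neighbour of both \<open>\<phi> (flip i x)\<close> and \<open>\<phi> (flip j x)\<close>; unless it is the neighbour
  predicted by the formula, it coincides with the image of their other common neighbour
  \<open>flip i (flip j x)\<close>.
\<close>

lemma hypercube_aut_coordinate_form_step:
  assumes aut: "graph_aut (hypercube_verts n) (hypercube_edges n) \<phi>"
    and \<pi>: "bij_betw \<pi> {..<n} {..<n}"
    and x: "length x = n" and i: "i < n" and j: "j < n" and "i \<noteq> j"
    and form: "\<And>y l. y \<in> {flip i x, flip j x, flip i (flip j x)} \<Longrightarrow> l < n \<Longrightarrow>
      \<phi> y ! \<pi> l = (y ! l \<noteq> a ! \<pi> l)"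
    and l: "l < n"
  shows "\<phi> x ! \<pi> l = (x ! l \<noteq> a ! \<pi> l)"
proof -
  note \<pi>_lt = bij_betw_lessThan_less[OF \<pi>] and \<pi>_eq = bij_betw_lessThan_eq_iff[OF \<pi>]
  note len = hypercube_aut_length[OF aut]
  obtain p where p: "\<phi> x = flip p (\<phi> (flip i x))"
    using hypercube_aut_flip[OF aut _ i, of "flip i x"] x by auto
  obtain q where q: "\<phi> x = flip q (\<phi> (flip j x))"
    using hypercube_aut_flip[OF aut _ j, of "flip j x"] x by auto
  have via_i: "\<phi> x ! \<pi> k = (((x ! k \<noteq> (k = i)) \<noteq> a ! \<pi> k) \<noteq> (\<pi> k = p))" if "k < n" for k
    using p form[of "flip i x" k] that x len \<pi>_lt by (simp add: nth_flip)
  have via_j: "\<phi> x ! \<pi> k = (((x ! k \<noteq> (k = j)) \<noteq> a ! \<pi> k) \<noteq> (\<pi> k = q))" if "k < n" for k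
    using q form[of "flip j x" k] that x len \<pi>_lt by (simp add: nth_flip)
  have "p = \<pi> i"
  proof (rule ccontr)
    assume "p \<noteq> \<pi> i"
    then have "q = \<pi> i" using via_i[OF i] via_j[OF i] \<open>i \<noteq> j\<close> by auto
    then have "p = \<pi> j" using via_i[OF j] via_j[OF j] \<pi>_eq[OF j i] \<open>i \<noteq> j\<close> by auto
    let ?w = "flip i (flip j x)"
    have "\<phi> x ! \<pi> k = \<phi> ?w ! \<pi> k" if "k < n" for k
      using via_i[OF that] form[of ?w k] that \<open>p = \<pi> j\<close> \<pi>_eq[OF that j] x
      by (auto simp: nth_flip)
    then have "\<phi> x = \<phi> ?w" using x len by (intro nth_eq_on_bij_imp_eq[OF \<pi>]) simp_all
    then have "x = ?w"
      using inj_onD[OF bij_betw_imp_inj_on[OF graph_aut_bij_betw[OF aut]]] x by simp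
    moreover have "?w ! i \<noteq> x ! i" using i j x \<open>i \<noteq> j\<close> by (simp add: nth_flip)
    ultimately show False by simp
  qed
  then show ?thesis using via_i[OF l] \<pi>_eq[OF l i] by (cases "l = i") auto
qed

lemma true_positions_flip:
  assumes "i < length x" "x ! i"
  shows "{k. k < length x \<and> flip i x ! k} = {k. k < length x \<and> x ! k} - {i}"
  using assms by (auto simp: nth_flip)

lemma hypercube_weight_induct:
  assumes x: "length x = n"
    and zero: "P (replicate n False)"
    and unit: "\<And>i. i < n \<Longrightarrow> P (flip i (replicate n False))"
    and step: "\<And>x i j. length x = n \<Longrightarrow> i < n \<Longrightarrow> j < n \<Longrightarrow> i \<noteq> j \<Longrightarrow> x ! i \<Longrightarrow> x ! j \<Longrightarrow>
      P (flip i x) \<Longrightarrow> P (flip j x) \<Longrightarrow> P (flip i (flip j x)) \<Longrightarrow> P x"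
  shows "P x"
proof -
  have "\<forall>x. length x = n \<and> {k. k < n \<and> x ! k} = S \<longrightarrow> P x" if "finite S" for S
    using that
  proof (induction S rule: finite_psubset_induct)
    case (psubset S)
    show ?case
    proof (rule allI, rule impI)
      fix x
      assume "length x = n \<and> {k. k < n \<and> x ! k} = S"
      then have x: "length x = n" and S: "S = {k. k < n \<and> x ! k}" by auto
      have IH: "P y" if "length y = n" "{k. k < n \<and> y ! k} \<subset> S" for y
        using psubset.IH[OF that(2)] that(1) by blast
      have "S = {} \<or> (\<exists>i. S = {i}) \<or> (\<exists>i\<in>S. \<exists>j\<in>S. i \<noteq> j)" by blast
      then consider "S = {}" | i where "S = {i}" | i j where "i \<in> S" "j \<in> S" "i \<noteq> j"
        by blast
      then show "P x"
      proof cases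
        case 1
        then have "x = replicate n False" using x S by (intro nth_equalityI) auto
        then show ?thesis using zero by simp
      next
        case (2 i)
        then have i: "i < n" using S by auto
        have "x = flip i (replicate n False)"
        proof (rule nth_equalityI)
          fix k
          assume "k < length x"
          then have "x ! k \<longleftrightarrow> k = i" using x S 2 by blast
          then show "x ! k = flip i (replicate n False) ! k"
            using \<open>k < length x\<close> x by (simp add: nth_flip)
        qed (simp add: x)
        then show ?thesis using unit[OF i] by simp
      next
        case (3 i j)
        then have ij: "i < n" "j < n" "x ! i" "x ! j" using S by auto
        have "flip j x ! i" using ij x \<open>i \<noteq> j\<close> by (simp add: nth_flip)
        then have ones: "{k. k < n \<and> flip i x ! k} = S - {i}" "{k. k < n \<and> flip j x ! k} = S - {j}"
          "{k. k < n \<and> flip i (flip j x) ! k} = S - {j} - {i}"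
          using true_positions_flip[of i x] true_positions_flip[of j x]
            true_positions_flip[of i "flip j x"] ij x S by simp_all
        show ?thesis
        proof (rule step[OF x ij(1,2) \<open>i \<noteq> j\<close> ij(3,4)])
          show "P (flip i x)" by (rule IH) (use x ones(1) 3 in auto)
          show "P (flip j x)" by (rule IH) (use x ones(2) 3 in auto)
          show "P (flip i (flip j x))" by (rule IH) (use x ones(3) 3 in auto)
        qed
      qed
    qed
  qed
  then show ?thesis using x by blast
qed

lemma hypercube_aut_coordinate_form_from_unit_vectors:
  assumes aut: "graph_aut (hypercube_verts n) (hypercube_edges n) \<phi>"
    and \<pi>: "bij_betw \<pi> {..<n} {..<n}"
    and unit: "\<And>i. i < n \<Longrightarrow> \<phi> (flip i (replicate n False)) = flip (\<pi> i) (\<phi> (replicate n False))"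
    and x: "length x = n" and l: "l < n"
  shows "\<phi> x ! \<pi> l = (x ! l \<noteq> \<phi> (replicate n False) ! \<pi> l)"
proof -
  define a where "a = \<phi> (replicate n False)"
  note \<pi>_lt = bij_betw_lessThan_less[OF \<pi>] and \<pi>_eq = bij_betw_lessThan_eq_iff[OF \<pi>]
  have "length a = n" unfolding a_def by (simp add: hypercube_aut_length[OF aut])
  have "\<forall>l<n. \<phi> x ! \<pi> l = (x ! l \<noteq> a ! \<pi> l)"
  proof (rule hypercube_weight_induct[OF x, where P = "\<lambda>x. \<forall>l<n. \<phi> x ! \<pi> l = (x ! l \<noteq> a ! \<pi> l)"])
    show "\<forall>l<n. \<phi> (replicate n False) ! \<pi> l = (replicate n False ! l \<noteq> a ! \<pi> l)"
      by (simp add: a_def)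
  next
    fix i
    assume i: "i < n"
    show "\<forall>l<n. \<phi> (flip i (replicate n False)) ! \<pi> l = (flip i (replicate n False) ! l \<noteq> a ! \<pi> l)"
    proof (intro allI impI)
      fix l
      assume "l < n"
      then show "\<phi> (flip i (replicate n False)) ! \<pi> l = (flip i (replicate n False) ! l \<noteq> a ! \<pi> l)"
        using unit[OF i] \<open>length a = n\<close> \<pi>_lt \<pi>_eq[OF _ i] unfolding a_def[symmetric]
        by (cases "l = i") (simp_all add: nth_flip)
    qed
  next
    fix y i j
    assume "length y = n" "i < n" "j < n" "i \<noteq> j"
      and "\<forall>l<n. \<phi> (flip i y) ! \<pi> l = (flip i y ! l \<noteq> a ! \<pi> l)"
        "\<forall>l<n. \<phi> (flip j y) ! \<pi> l = (flip j y ! l \<noteq> a ! \<pi> l)"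
        "\<forall>l<n. \<phi> (flip i (flip j y)) ! \<pi> l = (flip i (flip j y) ! l \<noteq> a ! \<pi> l)"
    note form = this(5-7)
    show "\<forall>l<n. \<phi> y ! \<pi> l = (y ! l \<noteq> a ! \<pi> l)"
    proof (intro allI impI)
      fix l
      assume "l < n"
      show "\<phi> y ! \<pi> l = (y ! l \<noteq> a ! \<pi> l)"
        by (rule hypercube_aut_coordinate_form_step[OF aut \<pi> \<open>length y = n\<close> \<open>i < n\<close> \<open>j < n\<close>
              \<open>i \<noteq> j\<close> _ \<open>l < n\<close>])
          (use form in auto)
    qed
  qed
  then show ?thesis using l unfolding a_def by blast
qed

theorem hypercube_aut_coordinate_form:
  assumes aut: "graph_aut (hypercube_verts n) (hypercube_edges n) \<phi>"
  obtains \<pi> where "bij_betw \<pi> {..<n} {..<n}"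
    and "\<And>x l. length x = n \<Longrightarrow> l < n \<Longrightarrow> \<phi> x ! \<pi> l = (x ! l \<noteq> \<phi> (replicate n False) ! \<pi> l)"
proof -
  define z where "z = replicate n False"
  have z: "length z = n" unfolding z_def by simp
  define \<pi> where "\<pi> i = (SOME p. p < n \<and> \<phi> (flip i z) = flip p (\<phi> z))" for i
  have \<pi>: "\<pi> i < n \<and> \<phi> (flip i z) = flip (\<pi> i) (\<phi> z)" if "i < n" for i
    unfolding \<pi>_def using someI_ex[OF hypercube_aut_flip[OF aut z that]] .
  have "inj_on \<pi> {..<n}"
  proof (rule inj_onI)
    fix i j
    assume "i \<in> {..<n}" "j \<in> {..<n}" "\<pi> i = \<pi> j"
    then have "\<phi> (flip i z) = \<phi> (flip j z)" and ij: "i < n" "j < n" using \<pi> by auto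
    then have "flip i z = flip j z"
      using inj_onD[OF bij_betw_imp_inj_on[OF graph_aut_bij_betw[OF aut]]] z by simp
    then show "i = j" using flip_eq_flip_iff ij z by simp
  qed
  moreover have "\<pi> ` {..<n} \<subseteq> {..<n}" using \<pi> by auto
  ultimately have bij: "bij_betw \<pi> {..<n} {..<n}"
    by (simp add: bij_betw_def endo_inj_surj)
  show thesis
    using that[OF bij] hypercube_aut_coordinate_form_from_unit_vectors[OF aut bij] \<pi>
    unfolding z_def by blast
qed

section \<open>Lower bound\<close>

lemma not_edge_determining_setI:
  assumes "graph_aut V E \<phi>" "\<And>u v. {u, v} \<in> T \<Longrightarrow> {\<phi> u, \<phi> v} = {u, v}" "x \<in> V" "\<phi> x \<noteq> x"
  shows "\<not> edge_determining_set V E T"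
  using assms unfolding edge_determining_set_def by blast

lemma single_direction_not_edge_determining:
  assumes i: "i < n" and dir: "\<And>e. e \<in> T \<Longrightarrow> \<exists>u. e = {u, flip i u}"
  shows "\<not> edge_determining_set (hypercube_verts n) (hypercube_edges n) T"
proof (rule not_edge_determining_setI[where \<phi> = "flip i" and x = "replicate n False"])
  show "graph_aut (hypercube_verts n) (hypercube_edges n) (flip i)"
    using graph_aut_coord_map[OF bij_betw_id, of n "\<lambda>k. k = i"] by (simp add: coord_map_id_eq_flip)
  show "{flip i u, flip i v} = {u, v}" if uv: "{u, v} \<in> T" for u v
  proof -
    obtain w where "{u, v} = {w, flip i w}" using dir[OF uv] by blast
    then show ?thesis by (auto simp: doubleton_eq_iff)
  qed
  have "flip i (replicate n False) ! i \<noteq> replicate n False ! i" using i by (simp add: nth_flip)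
  then show "flip i (replicate n False) \<noteq> replicate n False" by auto
qed simp

lemma twin_coordinates_not_edge_determining:
  assumes c: "c < n" "c' < n" "c \<noteq> c'" and T: "T \<subseteq> hypercube_edges n"
    and twin: "\<And>e x. e \<in> T \<Longrightarrow> x \<in> e \<Longrightarrow> x ! c = (x ! c' \<noteq> b)"
  shows "\<not> edge_determining_set (hypercube_verts n) (hypercube_edges n) T"
proof -
  define \<phi> where "\<phi> = coord_map (transpose c c') (\<lambda>k. b \<and> (k = c \<or> k = c'))"
  have aut: "graph_aut (hypercube_verts n) (hypercube_edges n) \<phi>"
    unfolding \<phi>_def by (rule graph_aut_coord_map) (use c in simp)
  have fixed: "\<phi> x = x" if "e \<in> T" "x \<in> e" for e x
  proof -
    have "e \<in> hypercube_edges n" using T that(1) by blast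
    then obtain u i where "length u = n" "e = {u, flip i u}" by (auto simp: hypercube_edges_iff)
    then have "length x = n" using that(2) by auto
    then show ?thesis
      using twin[OF that] c unfolding \<phi>_def
      by (intro nth_equalityI) (auto simp: nth_coord_map transpose_def)
  qed
  define x0 where "x0 = (replicate n False)[c := \<not> b]"
  have "\<phi> x0 ! c \<noteq> x0 ! c" using c unfolding \<phi>_def x0_def by (simp add: nth_coord_map)
  show ?thesis
  proof (rule not_edge_determining_setI[OF aut])
    show "{\<phi> u, \<phi> v} = {u, v}" if "{u, v} \<in> T" for u v
      using fixed[OF that] by simp
    show "x0 \<in> hypercube_verts n" unfolding x0_def by simp
    show "\<phi> x0 \<noteq> x0" using \<open>\<phi> x0 ! c \<noteq> x0 ! c\<close> by auto
  qed
qed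

lemma card_hypercube_edge_directions_le:
  assumes "finite T"
  shows "card {i. i < n \<and> (\<exists>u. length u = n \<and> {u, flip i u} \<in> T)} \<le> card T"
proof -
  define dirs where "dirs e = {i. i < n \<and> (\<exists>u. length u = n \<and> e = {u, flip i u})}" for e
  have card_dirs: "card (dirs e) \<le> 1" for e
  proof -
    have "finite (dirs e)" by (rule finite_subset[of _ "{..<n}"]) (auto simp: dirs_def)
    moreover have "i = j" if i: "i \<in> dirs e" and j: "j \<in> dirs e" for i j
    proof -
      obtain u where u: "i < n" "length u = n" "e = {u, flip i u}"
        using i unfolding dirs_def by blast
      obtain v where v: "j < n" "length v = n" "e = {v, flip j v}"
        using j unfolding dirs_def by blast
      show ?thesis using hypercube_edge_direction_unique[OF u(2) v(2) u(1) v(1)] u(3) v(3) by simp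
    qed
    ultimately show ?thesis by (simp add: card_le_Suc0_iff_eq)
  qed
  have "{i. i < n \<and> (\<exists>u. length u = n \<and> {u, flip i u} \<in> T)} = (\<Union>e\<in>T. dirs e)"
    unfolding dirs_def by blast
  then have "card {i. i < n \<and> (\<exists>u. length u = n \<and> {u, flip i u} \<in> T)} \<le> (\<Sum>e\<in>T. card (dirs e))"
    using card_UN_le[OF assms] by simp
  also have "\<dots> \<le> (\<Sum>e\<in>T. 1)" by (rule sum_mono) (rule card_dirs)
  finally show ?thesis by simp
qed

lemma card_undirected_coordinates_le:
  assumes eds: "edge_determining_set (hypercube_verts n) (hypercube_edges n) T" and e0: "e0 \<in> T"
  shows "card ({..<n} - {i. i < n \<and> (\<exists>u. length u = n \<and> {u, flip i u} \<in> T)}) \<le> 2 ^ (card T - 1)"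
proof -
  define C where "C = {..<n} - {i. i < n \<and> (\<exists>u. length u = n \<and> {u, flip i u} \<in> T)}"
  have TE: "T \<subseteq> hypercube_edges n" using eds unfolding edge_determining_set_def by blast
  have finT: "finite T" using finite_subset[OF TE finite_hypercube_edges] .
  have const: "x ! c = y ! c" if "c \<in> C" "e \<in> T" "x \<in> e" "y \<in> e" for c e x y
  proof -
    have "e \<in> hypercube_edges n" using TE that(2) by blast
    then obtain u i where u: "length u = n" "i < n" "e = {u, flip i u}"
      by (auto simp: hypercube_edges_iff)
    then have "c \<noteq> i" "c < n" using that(1,2) unfolding C_def by auto
    then show ?thesis using that(3,4) u by (auto simp: nth_flip)
  qed
  have "e0 \<in> hypercube_edges n" using TE e0 by blast
  then obtain x0 where x0: "x0 \<in> e0" unfolding hypercube_edges_iff by blast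
  \<comment> \<open>relative to \<open>x0\<close>, complementary coordinates get equal patterns and \<open>e0\<close> lies in none\<close>
  define pattern where "pattern c = {e \<in> T. \<exists>x\<in>e. x ! c \<noteq> x0 ! c}" for c
  have pattern_iff: "e \<in> pattern c \<longleftrightarrow> x ! c \<noteq> x0 ! c" if "c \<in> C" "e \<in> T" "x \<in> e" for c e x
    using const[OF that(1,2)] that unfolding pattern_def by blast
  have "inj_on pattern C"
  proof (rule inj_onI)
    fix c c'
    assume cC: "c \<in> C" "c' \<in> C" and eq: "pattern c = pattern c'"
    have twin: "x ! c = (x ! c' \<noteq> (x0 ! c \<noteq> x0 ! c'))" if "e \<in> T" "x \<in> e" for e x
      using pattern_iff[OF cC(1) that] pattern_iff[OF cC(2) that] eq by auto
    show "c = c'"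
    proof (rule ccontr)
      assume "c \<noteq> c'"
      have "\<not> edge_determining_set (hypercube_verts n) (hypercube_edges n) T"
      proof (rule twin_coordinates_not_edge_determining[OF _ _ \<open>c \<noteq> c'\<close> TE])
        show "c < n" "c' < n" using cC unfolding C_def by auto
        show "x ! c = (x ! c' \<noteq> (x0 ! c \<noteq> x0 ! c'))" if "e \<in> T" "x \<in> e" for e x
          using twin[OF that] .
      qed
      then show False using eds by simp
    qed
  qed
  moreover have "pattern ` C \<subseteq> Pow (T - {e0})"
    using pattern_iff[OF _ e0 x0] unfolding pattern_def by auto
  ultimately have "card C \<le> card (Pow (T - {e0}))" using finT by (intro card_inj_on_le) auto
  also have "\<dots> = 2 ^ (card T - 1)" using finT e0 by (simp add: card_Pow card_Diff_singleton)
  finally show ?thesis unfolding C_def .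
qed

theorem hypercube_edge_determining_set_card_bound:
  assumes eds: "edge_determining_set (hypercube_verts n) (hypercube_edges n) T"
  shows "n \<le> 2 ^ (card T - 1) + card T"
proof (cases "n = 0")
  case False
  define D where "D = {i. i < n \<and> (\<exists>u. length u = n \<and> {u, flip i u} \<in> T)}"
  have "finite T"
    using eds finite_subset[OF _ finite_hypercube_edges] unfolding edge_determining_set_def by blast
  have "T \<noteq> {}" using single_direction_not_edge_determining[of 0 n "{}"] False eds by auto
  then obtain e0 where "e0 \<in> T" by blast
  have "D \<subseteq> {..<n}" unfolding D_def by auto
  moreover have "finite D" using calculation by (rule finite_subset) simp
  ultimately have "card ({..<n} - D) = n - card D" and "card D \<le> n"
    using card_mono[of "{..<n}" D] by (simp_all add: card_Diff_subset)
  moreover have "card ({..<n} - D) \<le> 2 ^ (card T - 1)"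
    using card_undirected_coordinates_le[OF eds \<open>e0 \<in> T\<close>] unfolding D_def .
  moreover have "card D \<le> card T"
    using card_hypercube_edge_directions_le[OF \<open>finite T\<close>] unfolding D_def .
  ultimately show ?thesis by linarith
qed simp

section \<open>Upper bound\<close>

lemma coordinate_form_fixed_edge:
  assumes aut: "graph_aut (hypercube_verts n) (hypercube_edges n) \<phi>"
    and \<pi>: "bij_betw \<pi> {..<n} {..<n}"
    and form: "\<And>x l. length x = n \<Longrightarrow> l < n \<Longrightarrow> \<phi> x ! \<pi> l = (x ! l \<noteq> a ! \<pi> l)"
    and u: "length u = n" and j: "j < n"
    and fixed: "{\<phi> u, \<phi> (flip j u)} = {u, flip j u}"
  shows "\<pi> j = j" and "\<And>l. l < n \<Longrightarrow> l \<noteq> j \<Longrightarrow> u ! \<pi> l = (u ! l \<noteq> a ! \<pi> l)"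
proof -
  note \<pi>_lt = bij_betw_lessThan_less[OF \<pi>] and \<pi>_eq = bij_betw_lessThan_eq_iff[OF \<pi>]
  note len = hypercube_aut_length[OF aut]
  have "\<phi> (flip j u) = flip (\<pi> j) (\<phi> u)"
  proof (rule nth_eq_on_bij_imp_eq[OF \<pi>])
    fix l
    assume l: "l < n"
    show "\<phi> (flip j u) ! \<pi> l = flip (\<pi> j) (\<phi> u) ! \<pi> l"
      using form[of "flip j u" l] form[OF u l] u l len[OF u] \<pi>_lt[OF l] \<pi>_eq[OF l j]
      by (cases "l = j") (simp_all add: nth_flip)
  qed (simp_all add: u len)
  with fixed have edge: "{\<phi> u, flip (\<pi> j) (\<phi> u)} = {u, flip j u}" by simp
  then show \<pi>j: "\<pi> j = j"
    using hypercube_edge_direction_unique[OF len[OF u] u \<pi>_lt[OF j] j] by simp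
  fix l
  assume l: "l < n" "l \<noteq> j"
  have "\<pi> l \<noteq> j" using \<pi>_eq[OF l(1) j] \<pi>j l(2) by simp
  moreover have "\<phi> u = u \<or> \<phi> u = flip j u" using edge by (auto simp: doubleton_eq_iff)
  ultimately have "\<phi> u ! \<pi> l = u ! \<pi> l" using u \<pi>_lt[OF l(1)] by (auto simp: nth_flip)
  then show "u ! \<pi> l = (u ! l \<noteq> a ! \<pi> l)" using form[OF u l(1)] by simp
qed

lemma eq_if_low_bits_eq:
  fixes m m' :: nat
  assumes "m < 2 ^ k" "m' < 2 ^ k" "\<And>j. j < k \<Longrightarrow> bit m j = bit m' j"
  shows "m = m'"
proof -
  have "take_bit k m = take_bit k m'"
    using assms(3) by (auto simp: bit_eq_iff bit_take_bit_iff)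
  then show ?thesis using assms(1,2) take_bit_nat_eq_self_iff by metis
qed

definition code_vertex :: "nat \<Rightarrow> nat \<Rightarrow> nat \<Rightarrow> bool list" where
  "code_vertex n t j = map (\<lambda>c. t \<le> c \<and> j < t - 1 \<and> bit (c - t) j) [0..<n]"

lemma length_code_vertex [simp]: "length (code_vertex n t j) = n"
  by (simp add: code_vertex_def)

lemma nth_code_vertex: "c < n \<Longrightarrow> code_vertex n t j ! c = (t \<le> c \<and> j < t - 1 \<and> bit (c - t) j)"
  by (simp add: code_vertex_def)

lemma code_vertices_pin_coordinates:
  assumes t: "2 \<le> t" "n \<le> 2 ^ (t - 1) + t" and \<pi>: "bij_betw \<pi> {..<n} {..<n}"
    and pinned: "\<And>j. j < t \<Longrightarrow> \<pi> j = j"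
    and agree: "\<And>j l. j < t \<Longrightarrow> l < n \<Longrightarrow> l \<noteq> j \<Longrightarrow>
      code_vertex n t j ! \<pi> l = (code_vertex n t j ! l \<noteq> a ! \<pi> l)"
    and l: "l < n"
  shows "\<pi> l = l \<and> \<not> a ! l"
proof (cases "l < t")
  case True
  define j where "j = (if l = 0 then 1 else 0 :: nat)"
  have "j < t" "j \<noteq> l" using t(1) by (auto simp: j_def)
  then show ?thesis using agree[of j l] pinned[OF True] l by auto
next
  case False
  have \<pi>_lt: "\<pi> l < n" using bij_betw_lessThan_less[OF \<pi> l] .
  have "t \<le> \<pi> l"
  proof (rule ccontr)
    assume "\<not> t \<le> \<pi> l"
    then have "\<pi> (\<pi> l) = \<pi> l" using pinned by simp
    then have "\<pi> l = l" using bij_betw_lessThan_eq_iff[OF \<pi> \<pi>_lt l] by simp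
    then show False using False \<open>\<not> t \<le> \<pi> l\<close> by simp
  qed
  have no_a: "\<not> a ! \<pi> l"
    using agree[of "t - 1" l] t(1) False l \<pi>_lt by (simp add: nth_code_vertex)
  have "bit (\<pi> l - t) j = bit (l - t) j" if "j < t - 1" for j
    using agree[of j l] that t(1) False l \<pi>_lt \<open>t \<le> \<pi> l\<close> no_a by (simp add: nth_code_vertex)
  moreover have "\<pi> l - t < 2 ^ (t - 1)" "l - t < 2 ^ (t - 1)"
    using t(2) l \<pi>_lt \<open>t \<le> \<pi> l\<close> False by arith+
  ultimately have "\<pi> l - t = l - t" by (intro eq_if_low_bits_eq) auto
  then have "\<pi> l = l" using \<open>t \<le> \<pi> l\<close> False by simp
  then show ?thesis using no_a by simp
qed

theorem hypercube_edge_determining_set_exists: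
  assumes t: "2 \<le> t" "t \<le> n" "n \<le> 2 ^ (t - 1) + t"
  shows "\<exists>T. edge_determining_set (hypercube_verts n) (hypercube_edges n) T \<and> card T = t"
proof -
  define e where "e j = {code_vertex n t j, flip j (code_vertex n t j)}" for j
  define T where "T = e ` {..<t}"
  have "inj_on e {..<t}"
  proof (rule inj_onI)
    fix i j
    assume "i \<in> {..<t}" "j \<in> {..<t}" "e i = e j"
    then show "i = j"
      using hypercube_edge_direction_unique[of "code_vertex n t i" n "code_vertex n t j" i j] t(2)
      unfolding e_def by auto
  qed
  then have "card T = t" unfolding T_def by (simp add: card_image)
  moreover have "edge_determining_set (hypercube_verts n) (hypercube_edges n) T"
    unfolding edge_determining_set_def
  proof (intro conjI allI impI ballI)
    show "T \<subseteq> hypercube_edges n"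
    proof
      fix f
      assume "f \<in> T"
      then obtain j where "j < t" "f = e j" unfolding T_def by auto
      then show "f \<in> hypercube_edges n"
        unfolding hypercube_edges_iff e_def using t(2)
        by (intro exI[of _ "code_vertex n t j"] exI[of _ j]) auto
    qed
    fix \<phi> x
    assume "graph_aut (hypercube_verts n) (hypercube_edges n) \<phi> \<and>
      (\<forall>u v. {u, v} \<in> T \<longrightarrow> {\<phi> u, \<phi> v} = {u, v})"
    then have aut: "graph_aut (hypercube_verts n) (hypercube_edges n) \<phi>"
      and fixed: "\<And>j. j < t \<Longrightarrow> {\<phi> (code_vertex n t j), \<phi> (flip j (code_vertex n t j))} = e j"
      unfolding T_def e_def by auto
    assume "x \<in> hypercube_verts n"
    obtain \<pi> where \<pi>: "bij_betw \<pi> {..<n} {..<n}"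
      and form: "\<And>x l. length x = n \<Longrightarrow> l < n \<Longrightarrow> \<phi> x ! \<pi> l = (x ! l \<noteq> \<phi> (replicate n False) ! \<pi> l)"
      using hypercube_aut_coordinate_form[OF aut] by blast
    have pin: "\<pi> l = l \<and> \<not> \<phi> (replicate n False) ! l" if "l < n" for l
    proof (rule code_vertices_pin_coordinates[OF t(1,3) \<pi> _ _ that])
      fix j
      assume "j < t"
      note edge = coordinate_form_fixed_edge[OF aut \<pi> form length_code_vertex _ fixed[OF this, unfolded e_def]]
      show "\<pi> j = j" using edge(1) \<open>j < t\<close> t(2) by simp
      show "code_vertex n t j ! \<pi> l' = (code_vertex n t j ! l' \<noteq> \<phi> (replicate n False) ! \<pi> l')"
        if "l' < n" "l' \<noteq> j" for l'
        using edge(2) that \<open>j < t\<close> t(2) by simp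
    qed
    show "\<phi> x = x"
    proof (rule nth_equalityI)
      show "length (\<phi> x) = length x" using hypercube_aut_length[OF aut] \<open>x \<in> hypercube_verts n\<close> by simp
      fix l
      assume "l < length (\<phi> x)"
      then have "l < n" using hypercube_aut_length[OF aut] \<open>x \<in> hypercube_verts n\<close> by simp
      then show "\<phi> x ! l = x ! l" using form[of x l] pin[of l] \<open>x \<in> hypercube_verts n\<close> by simp
    qed
  qed
  ultimately show ?thesis by blast
qed

section \<open>The determining index\<close>

lemma determining_index_eqI:
  assumes "edge_determining_set V E T" "card T = m"
    and "\<And>T. edge_determining_set V E T \<Longrightarrow> m \<le> card T"
  shows "determining_index V E = m"
  unfolding determining_index_def using assms by (intro Least_equality) auto

theorem determining_index_hypercube:
  assumes "3 \<le> n"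
  shows "determining_index (hypercube_verts n) (hypercube_edges n) = (LEAST t. n \<le> 2 ^ (t - 1) + t)"
proof -
  define m where "m = (LEAST t. n \<le> 2 ^ (t - 1) + t)"
  have "n \<le> 2 ^ (n - 1) + n" by simp
  then have m: "n \<le> 2 ^ (m - 1) + m" and "m \<le> n"
    unfolding m_def by (rule LeastI, rule Least_le)
  have "2 \<le> m"
  proof (rule ccontr)
    assume "\<not> 2 \<le> m"
    then have "m = 0 \<or> m = 1" by arith
    then have "2 ^ (m - 1) + m \<le> (2::nat)" by auto
    then show False using m assms by simp
  qed
  obtain T where "edge_determining_set (hypercube_verts n) (hypercube_edges n) T" "card T = m"
    using hypercube_edge_determining_set_exists[OF \<open>2 \<le> m\<close> \<open>m \<le> n\<close> m] by blast
  then show ?thesis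
    unfolding m_def[symmetric]
    using hypercube_edge_determining_set_card_bound
    by (intro determining_index_eqI) (auto simp: m_def intro: Least_le)
qed

lemma Least_threshold_eq:
  fixes f :: "nat \<Rightarrow> nat"
  assumes "mono f" "f m < n" "n \<le> f (Suc m)"
  shows "(LEAST t. n \<le> f t) = Suc m"
proof (rule Least_equality)
  show "\<And>t. n \<le> f t \<Longrightarrow> Suc m \<le> t"
    using assms(1,2) by (metis monoD not_less_eq_eq order.strict_trans2 less_le_not_le)
qed (fact assms(3))

theorem corollary3:
  fixes n k :: nat
  assumes "n \<ge> 3"
    and "k = nat \<lceil>log 2 (real n)\<rceil>"
  shows "(2 ^ (k - 1) < n \<and> n \<le> 2 ^ (k - 1) + k \<longrightarrow>
            determining_index (hypercube_verts n) (hypercube_edges n) = k)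
       \<and> (2 ^ (k - 1) + k < n \<and> n \<le> 2 ^ k \<longrightarrow>
            determining_index (hypercube_verts n) (hypercube_edges n) = k + 1)"
proof -
  define f :: "nat \<Rightarrow> nat" where "f t = 2 ^ (t - 1) + t" for t
  have "f s \<le> f t" if "s \<le> t" for s t
    unfolding f_def using that by (intro add_mono power_increasing) simp_all
  then have "mono f" by (rule monoI)
  have det: "determining_index (hypercube_verts n) (hypercube_edges n) = (LEAST t. n \<le> f t)"
    unfolding f_def using determining_index_hypercube assms(1) by simp
  have k: "k = ceillog2 n" using assms by (simp add: ceillog2_def)
  have "\<not> k \<le> 1" using ceillog2_le_iff[of n 1] assms(1) k by simp
  define j where "j = k - 2"
  have j: "k = Suc (Suc j)" using \<open>\<not> k \<le> 1\<close> unfolding j_def by arith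
  have "f (Suc j) \<le> 2 ^ Suc j" using less_exp[of j] by (simp add: f_def Suc_le_eq)
  show ?thesis
  proof (intro conjI impI)
    assume "2 ^ (k - 1) < n \<and> n \<le> 2 ^ (k - 1) + k"
    then have "f (Suc j) < n" "n \<le> f (Suc (Suc j))"
      using \<open>f (Suc j) \<le> 2 ^ Suc j\<close> j by (simp_all add: f_def)
    then show "determining_index (hypercube_verts n) (hypercube_edges n) = k"
      using det Least_threshold_eq[OF \<open>mono f\<close>] j by simp
  next
    assume "2 ^ (k - 1) + k < n \<and> n \<le> 2 ^ k"
    then have "f k < n" "n \<le> f (Suc k)" by (simp_all add: f_def)
    then show "determining_index (hypercube_verts n) (hypercube_edges n) = k + 1"
      using det Least_threshold_eq[OF \<open>mono f\<close>] by simp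
  qed
qed

end
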